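(* Let $A=\{a_n\}_{n\in\mathbb Z}\subset\mathbb R$ be an almost periodic set (multiplicities counted). Then there is $k_2\in\mathbb N$ such that for every $h>0$ and all $x_1,x_2\in\mathbb R$, $$\big|\#(A\cap[x_1,x_1+h))-\#(A\cap[x_2,x_2+h))\big|\le k_2,$$ and for every $x\in\mathbb R$, $h>0$, $M\in\mathbb N$, $$\Big|\#(A\cap[x,x+h))-\tfrac1M\,\#(A\cap[x,x+Mh))\Big|\le k_2.$$
   Context: A discrete locally finite multiset $A=\{a_n\}_{n\in\mathbb Z}\subset\mathbb R$ (a point may occur several times in the sequence) is called almost periodic if for every $\varepsilon>0$ the set of $\varepsilon$-almost periods $$E_\varepsilon=\{\tau\in\mathbb R:\ \exists\text{ a bijection }\sigma:\mathbb Z\to\mathbb Z\text{ with }\sup_n|a_n+\tau-a_{\sigma(n)}|<\varepsilon\}$$ is relatively dense, i.e. there is $L_\varepsilon>0$ such that $E_\varepsilon\cap(x,x+L_\varepsilon)\neq\emptyset$ for every $x\in\mathbb R$. For a set $H\subset\mathbb R$, $\#(A\cap H)$ denotes the number of indices $n$ with $a_n\in H$ (points counted with multiplicity). *)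

theory Defs
  imports Complex_Main
begin

text \<open>A multiset A = {a_n}, n in Z, is represented by the sequence a :: int => real.
  Locally finite: every bounded interval contains a_n for only finitely many indices n.\<close>
definition locally_finite_seq :: "(int \<Rightarrow> real) \<Rightarrow> bool" where
  "locally_finite_seq a \<longleftrightarrow> (\<forall>x y. finite {n. a n \<in> {x..y}})"

definition count_in :: "(int \<Rightarrow> real) \<Rightarrow> real set \<Rightarrow> nat" where
  "count_in a H = card {n. a n \<in> H}"

definition almost_period :: "(int \<Rightarrow> real) \<Rightarrow> real \<Rightarrow> real \<Rightarrow> bool" where
  "almost_period a \<epsilon> \<tau> \<longleftrightarrow>
     (\<exists>\<sigma>::int \<Rightarrow> int. bij \<sigma> \<and>
        bdd_above (range (\<lambda>n. \<bar>a n + \<tau> - a (\<sigma> n)\<bar>)) \<and>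
        (SUP n. \<bar>a n + \<tau> - a (\<sigma> n)\<bar>) < \<epsilon>)"

definition relatively_dense :: "real set \<Rightarrow> bool" where
  "relatively_dense E \<longleftrightarrow> (\<exists>L>0. \<forall>x. E \<inter> {x<..<x+L} \<noteq> {})"

definition almost_periodic_seq :: "(int \<Rightarrow> real) \<Rightarrow> bool" where
  "almost_periodic_seq a \<longleftrightarrow> locally_finite_seq a \<and>
     (\<forall>\<epsilon>>0. relatively_dense {\<tau>. almost_period a \<epsilon> \<tau>})"

end

theory Submission
  imports Defs
begin

text \<open>A 1-almost period \<open>\<tau>\<close> comes with a bijection \<open>\<sigma>\<close> of the indices that moves every point
  by \<open>\<tau>\<close> up to an error less than 1, so it injects the points of \<open>[x, x + h)\<close> into
  \<open>[x + \<tau> - 1, x + \<tau> + h + 1)\<close>. Since such \<open>\<tau>\<close> occur in every window of some fixed length \<open>L\<close>,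
  the same argument bounds the number of points in any interval of length \<open>L + 1\<close> uniformly,
  and moves \<open>[x\<^sub>1, x\<^sub>1 + h)\<close> into \<open>[x\<^sub>2, x\<^sub>2 + h)\<close> enlarged by two such intervals.
  The second inequality follows by cutting \<open>[x, x + M h)\<close> into \<open>M\<close> translates of \<open>[x, x + h)\<close>.\<close>

lemma locally_finite_seq_finite_indices:
  assumes "locally_finite_seq a" "S \<subseteq> {x..y}"
  shows "finite {n. a n \<in> S}"
proof -
  have "finite {n. a n \<in> {x..y}}"
    using assms(1) unfolding locally_finite_seq_def by blast
  then show ?thesis
    by (rule finite_subset[rotated]) (use assms(2) in auto)
qed

lemma count_in_mono:
  assumes "locally_finite_seq a" "S \<subseteq> T" "T \<subseteq> {x..y}"
  shows "count_in a S \<le> count_in a T"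
  unfolding count_in_def
  by (rule card_mono[OF locally_finite_seq_finite_indices[OF assms(1,3)]]) (use assms(2) in auto)

lemma count_in_le_if_inj_maps:
  assumes "locally_finite_seq a" "T \<subseteq> {x..y}" "inj \<sigma>"
    and "\<And>n. a n \<in> S \<Longrightarrow> a (\<sigma> n) \<in> T"
  shows "count_in a S \<le> count_in a T"
  unfolding count_in_def
proof (rule card_inj_on_le[where f = \<sigma>])
  show "inj_on \<sigma> {n. a n \<in> S}"
    using assms(3) by (simp add: inj_on_def inj_def)
  show "\<sigma> ` {n. a n \<in> S} \<subseteq> {n. a n \<in> T}"
    using assms(4) by auto
  show "finite {n. a n \<in> T}"
    by (rule locally_finite_seq_finite_indices[OF assms(1,2)])
qed

lemma count_in_split:
  assumes "locally_finite_seq a" "x \<le> y" "y \<le> z"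
  shows "count_in a {x..<z} = count_in a {x..<y} + count_in a {y..<z}"
proof -
  have "{n. a n \<in> {x..<z}} = {n. a n \<in> {x..<y}} \<union> {n. a n \<in> {y..<z}}"
    using assms by auto
  moreover have "finite {n. a n \<in> {u..<v}}" for u v
    by (rule locally_finite_seq_finite_indices[OF assms(1), of _ u v]) auto
  ultimately show ?thesis
    unfolding count_in_def by (simp add: card_Un_disjoint disjoint_iff)
qed

lemma almost_period_pointwise:
  assumes "almost_period a \<epsilon> \<tau>"
  obtains \<sigma> where "bij \<sigma>" "\<And>n. \<bar>a n + \<tau> - a (\<sigma> n)\<bar> < \<epsilon>"
proof -
  obtain \<sigma> where \<sigma>: "bij \<sigma>" "bdd_above (range (\<lambda>n. \<bar>a n + \<tau> - a (\<sigma> n)\<bar>))"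
    "(SUP n. \<bar>a n + \<tau> - a (\<sigma> n)\<bar>) < \<epsilon>"
    using assms unfolding almost_period_def by blast
  have "\<bar>a n + \<tau> - a (\<sigma> n)\<bar> < \<epsilon>" for n
    using cSUP_upper[OF UNIV_I \<sigma>(2), of n] \<sigma>(3) by linarith
  with \<sigma>(1) show thesis by (rule that)
qed

lemma almost_periodic_seq_periods_in_windows:
  assumes "almost_periodic_seq a"
  obtains L where "L > 0"
    "\<And>x. \<exists>\<tau> \<sigma>. x < \<tau> \<and> \<tau> < x + L \<and> bij \<sigma> \<and> (\<forall>n. \<bar>a n + \<tau> - a (\<sigma> n)\<bar> < 1)"
proof -
  obtain L where "L > 0" and L: "\<And>x. {\<tau>. almost_period a 1 \<tau>} \<inter> {x<..<x+L} \<noteq> {}"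
    using assms zero_less_one unfolding almost_periodic_seq_def relatively_dense_def by blast
  have "\<exists>\<tau> \<sigma>. x < \<tau> \<and> \<tau> < x + L \<and> bij \<sigma> \<and> (\<forall>n. \<bar>a n + \<tau> - a (\<sigma> n)\<bar> < 1)" for x
  proof -
    obtain \<tau> where "almost_period a 1 \<tau>" "x < \<tau>" "\<tau> < x + L"
      using L[of x] by auto
    then show ?thesis
      by (metis almost_period_pointwise)
  qed
  with \<open>L > 0\<close> show thesis by (rule that)
qed

lemma almost_periodic_count_in_bounded:
  assumes "almost_periodic_seq a"
  shows "\<exists>B. \<forall>x. count_in a {x..<x+d} \<le> B"
proof -
  have lf: "locally_finite_seq a"
    using assms unfolding almost_periodic_seq_def by blast
  obtain L where periods:
    "\<And>x. \<exists>\<tau> \<sigma>. x < \<tau> \<and> \<tau> < x + L \<and> bij \<sigma> \<and> (\<forall>n. \<bar>a n + \<tau> - a (\<sigma> n)\<bar> < 1)"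
    using almost_periodic_seq_periods_in_windows[OF assms] by blast
  have "count_in a {x..<x+d} \<le> count_in a {-1..d+L+1}" for x
  proof -
    obtain \<tau> \<sigma> where \<tau>: "-x < \<tau>" "\<tau> < -x + L" "bij \<sigma>" "\<forall>n. \<bar>a n + \<tau> - a (\<sigma> n)\<bar> < 1"
      using periods[of "-x"] by blast
    show ?thesis
    proof (rule count_in_le_if_inj_maps[OF lf order_refl])
      show "inj \<sigma>" using \<tau>(3) bij_is_inj by blast
      fix n assume "a n \<in> {x..<x+d}"
      then show "a (\<sigma> n) \<in> {-1..d+L+1}"
        using \<tau>(1,2) \<tau>(4)[rule_format, of n] by auto
    qed
  qed
  then show ?thesis by blast
qed

lemma almost_periodic_count_in_translate_le:
  assumes "almost_periodic_seq a"
  shows "\<exists>C. \<forall>h>0. \<forall>x\<^sub>1 x\<^sub>2. count_in a {x\<^sub>1..<x\<^sub>1+h} \<le> count_in a {x\<^sub>2..<x\<^sub>2+h} + C"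
proof -
  have lf: "locally_finite_seq a"
    using assms unfolding almost_periodic_seq_def by blast
  obtain L where "L > 0" and periods:
    "\<And>x. \<exists>\<tau> \<sigma>. x < \<tau> \<and> \<tau> < x + L \<and> bij \<sigma> \<and> (\<forall>n. \<bar>a n + \<tau> - a (\<sigma> n)\<bar> < 1)"
    using almost_periodic_seq_periods_in_windows[OF assms] by blast
  obtain B where B: "\<And>x. count_in a {x..<x+(L+1)} \<le> B"
    using almost_periodic_count_in_bounded[OF assms] by blast
  have "count_in a {x\<^sub>1..<x\<^sub>1+h} \<le> count_in a {x\<^sub>2..<x\<^sub>2+h} + 2 * B"
    if "h > 0" for h x\<^sub>1 x\<^sub>2
  proof -
    obtain \<tau> \<sigma> where \<tau>: "x\<^sub>2 - x\<^sub>1 - L < \<tau>" "\<tau> < x\<^sub>2 - x\<^sub>1" "bij \<sigma>"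
      "\<forall>n. \<bar>a n + \<tau> - a (\<sigma> n)\<bar> < 1"
      using periods[of "x\<^sub>2 - x\<^sub>1 - L"] by auto
    have "count_in a {x\<^sub>1..<x\<^sub>1+h} \<le> count_in a {x\<^sub>2-(L+1)..<x\<^sub>2+h+1}"
    proof (rule count_in_le_if_inj_maps[OF lf])
      show "{x\<^sub>2-(L+1)..<x\<^sub>2+h+1} \<subseteq> {x\<^sub>2-(L+1)..x\<^sub>2+h+1}" by auto
      show "inj \<sigma>" using \<tau>(3) bij_is_inj by blast
      fix n assume "a n \<in> {x\<^sub>1..<x\<^sub>1+h}"
      then show "a (\<sigma> n) \<in> {x\<^sub>2-(L+1)..<x\<^sub>2+h+1}"
        using \<tau>(1,2) \<tau>(4)[rule_format, of n] by auto
    qed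
    also have "\<dots> = count_in a {x\<^sub>2-(L+1)..<x\<^sub>2} + count_in a {x\<^sub>2..<x\<^sub>2+h+1}"
      by (rule count_in_split[OF lf]) (use \<open>L > 0\<close> that in auto)
    also have "count_in a {x\<^sub>2..<x\<^sub>2+h+1} = count_in a {x\<^sub>2..<x\<^sub>2+h} + count_in a {x\<^sub>2+h..<x\<^sub>2+h+1}"
      by (rule count_in_split[OF lf]) (use that in auto)
    also have "count_in a {x\<^sub>2-(L+1)..<x\<^sub>2} \<le> B"
      using B[of "x\<^sub>2-(L+1)"] by simp
    also have "count_in a {x\<^sub>2+h..<x\<^sub>2+h+1} \<le> count_in a {x\<^sub>2+h..<x\<^sub>2+h+(L+1)}"
      by (rule count_in_mono[OF lf, where x = "x\<^sub>2+h" and y = "x\<^sub>2+h+(L+1)"])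
        (use \<open>L > 0\<close> in auto)
    also have "\<dots> \<le> B"
      by (rule B)
    finally show ?thesis by simp
  qed
  then show ?thesis by blast
qed

lemma count_in_multiple_deviation:
  assumes "locally_finite_seq a" "h > 0"
    and deviation: "\<And>x\<^sub>1 x\<^sub>2. \<bar>real (count_in a {x\<^sub>1..<x\<^sub>1+h}) - real (count_in a {x\<^sub>2..<x\<^sub>2+h})\<bar> \<le> k"
  shows "\<bar>real M * real (count_in a {x..<x+h}) - real (count_in a {x..<x + real M * h})\<bar>
    \<le> real M * k"
proof (induction M)
  case 0
  then show ?case by (simp add: count_in_def)
next
  case (Suc M)
  let ?y = "x + real M * h"
  have "count_in a {x..<x + real (Suc M) * h} = count_in a {x..<?y} + count_in a {?y..<?y + h}"
    using count_in_split[OF assms(1), of x ?y "?y + h"] assms(2)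
    by (simp add: algebra_simps)
  then show ?case
    using Suc.IH deviation[of x ?y] by (simp add: algebra_simps)
qed

theorem proposition2:
  fixes a :: "int \<Rightarrow> real"
  assumes "almost_periodic_seq a"
  shows "\<exists>k2::nat.
    (\<forall>h>0. \<forall>x1 x2.
        \<bar>real (count_in a {x1..<x1+h}) - real (count_in a {x2..<x2+h})\<bar> \<le> real k2) \<and>
    (\<forall>x. \<forall>h>0. \<forall>M::nat. M \<ge> 1 \<longrightarrow>
        \<bar>real (count_in a {x..<x+h}) - real (count_in a {x..<x + real M * h}) / real M\<bar> \<le> real k2)"
proof -
  have lf: "locally_finite_seq a"
    using assms unfolding almost_periodic_seq_def by blast
  obtain C where C: "\<And>h x\<^sub>1 x\<^sub>2. h > 0 \<Longrightarrow> count_in a {x\<^sub>1..<x\<^sub>1+h} \<le> count_in a {x\<^sub>2..<x\<^sub>2+h} + C"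
    using almost_periodic_count_in_translate_le[OF assms] by blast
  have deviation: "\<bar>real (count_in a {x\<^sub>1..<x\<^sub>1+h}) - real (count_in a {x\<^sub>2..<x\<^sub>2+h})\<bar> \<le> real C"
    if "h > 0" for h x\<^sub>1 x\<^sub>2
    using C[OF that, of x\<^sub>1 x\<^sub>2] C[OF that, of x\<^sub>2 x\<^sub>1] by linarith
  have "\<bar>real (count_in a {x..<x+h}) - real (count_in a {x..<x + real M * h}) / real M\<bar> \<le> real C"
    if "h > 0" "M \<ge> 1" for x h M
  proof -
    have "real M * \<bar>real (count_in a {x..<x+h}) - real (count_in a {x..<x + real M * h}) / real M\<bar>
        = \<bar>real M * real (count_in a {x..<x+h}) - real (count_in a {x..<x + real M * h})\<bar>"
      using that(2) by (simp add: field_simps abs_mult)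
    also have "\<dots> \<le> real M * real C"
      by (rule count_in_multiple_deviation[OF lf that(1) deviation[OF that(1)]])
    finally show ?thesis
      using that(2) by simp
  qed
  with deviation show ?thesis by blast
qed

end
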